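(* Let $S: x=x(u,v)$, $(u,v)\in\mathcal D$, be a strongly regular Weingarten surface parameterized by principal parameters, with $\nu_1=f(\nu)$, $\nu_2=g(\nu)$, $\nu=\nu(u,v)$. Let $\Phi$ be an antiderivative of $f'/(f-g)$ and $\Psi$ an antiderivative of $g'/(g-f)$ on $\mathcal I$. Then the function $\lambda=\ln\{\sqrt E\,\exp(\Phi(\nu(u,v)))\}$ does not depend on $v$, and the function $\mu=\ln\{\sqrt G\,\exp(\Psi(\nu(u,v)))\}$ does not depend on $u$.
   Context: $E,F,G$ and $L,M,N$ are the coefficients of the first and second fundamental forms; principal parameters means $F=M=0$ and no umbilical points. Principal curvatures: $\nu_1=L/E$, $\nu_2=N/G$; principal geodesic curvatures: $\gamma_1=-\frac{E_v}{2E\sqrt G}$, $\gamma_2=\frac{G_u}{2G\sqrt E}$. $S$ is strongly regular if $(\nu_1-\nu_2)\gamma_1\gamma_2\neq0$ on $\mathcal D$, with the convention $\nu_1-\nu_2>0$. A strongly regular surface is Weingarten if there exist differentiable functions $f(\nu),g(\nu)$, $\nu\in\mathcal I\subseteq\mathbb R$, with $f-g>0$, $f'g'\neq0$, and a differentiable function $\nu(u,v)\in\mathcal I$ with $\nu_u\nu_v\neq0$ on $\mathcal D$, such that $\nu_1=f(\nu)$, $\nu_2=g(\nu)$. *)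

theory Defs
  imports "HOL-Analysis.Analysis" "HOL-Analysis.Cross3"
begin

definition pu :: "(real \<times> real \<Rightarrow> 'a::real_normed_vector) \<Rightarrow> real \<times> real \<Rightarrow> 'a" where
  "pu f p = vector_derivative (\<lambda>s. f (s, snd p)) (at (fst p))"

definition pv :: "(real \<times> real \<Rightarrow> 'a::real_normed_vector) \<Rightarrow> real \<times> real \<Rightarrow> 'a" where
  "pv f p = vector_derivative (\<lambda>s. f (fst p, s)) (at (snd p))"

fun Ck :: "nat \<Rightarrow> (real \<times> real \<Rightarrow> 'a::real_normed_vector) \<Rightarrow> (real \<times> real) set \<Rightarrow> bool" where
  "Ck 0 f D = continuous_on D f"
| "Ck (Suc k) f D =
     (continuous_on D f \<and>
      (\<forall>p\<in>D. (\<lambda>s. f (s, snd p)) differentiable (at (fst p)) \<and>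
             (\<lambda>s. f (fst p, s)) differentiable (at (snd p))) \<and>
      Ck k (pu f) D \<and> Ck k (pv f) D)"

definition unit_normal :: "(real \<times> real \<Rightarrow> real^3) \<Rightarrow> real \<times> real \<Rightarrow> real^3" where
  "unit_normal x p = (1 / norm (cross3 (pu x p) (pv x p))) *\<^sub>R (cross3 (pu x p) (pv x p))"

definition coefE :: "(real \<times> real \<Rightarrow> real^3) \<Rightarrow> real \<times> real \<Rightarrow> real" where
  "coefE x p = pu x p \<bullet> pu x p"
definition coefF :: "(real \<times> real \<Rightarrow> real^3) \<Rightarrow> real \<times> real \<Rightarrow> real" where
  "coefF x p = pu x p \<bullet> pv x p"
definition coefG :: "(real \<times> real \<Rightarrow> real^3) \<Rightarrow> real \<times> real \<Rightarrow> real" where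
  "coefG x p = pv x p \<bullet> pv x p"
definition coefL :: "(real \<times> real \<Rightarrow> real^3) \<Rightarrow> real \<times> real \<Rightarrow> real" where
  "coefL x p = pu (pu x) p \<bullet> unit_normal x p"
definition coefM :: "(real \<times> real \<Rightarrow> real^3) \<Rightarrow> real \<times> real \<Rightarrow> real" where
  "coefM x p = pv (pu x) p \<bullet> unit_normal x p"
definition coefN :: "(real \<times> real \<Rightarrow> real^3) \<Rightarrow> real \<times> real \<Rightarrow> real" where
  "coefN x p = pv (pv x) p \<bullet> unit_normal x p"

text \<open>Principal curvatures and principal geodesic curvatures (for principal parameters).\<close>
definition nu1 where "nu1 x p = coefL x p / coefE x p"
definition nu2 where "nu2 x p = coefN x p / coefG x p"
definition gamma1 where "gamma1 x p = - pv (coefE x) p / (2 * coefE x p * sqrt (coefG x p))"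
definition gamma2 where "gamma2 x p = pu (coefG x) p / (2 * coefG x p * sqrt (coefE x p))"

definition regular_surface :: "(real \<times> real \<Rightarrow> real^3) \<Rightarrow> (real \<times> real) set \<Rightarrow> bool" where
  "regular_surface x D \<longleftrightarrow> open D \<and> Ck 3 x D \<and> (\<forall>p\<in>D. cross3 (pu x p) (pv x p) \<noteq> 0)"

definition principal_params where
  "principal_params x D \<longleftrightarrow> (\<forall>p\<in>D. coefF x p = 0 \<and> coefM x p = 0 \<and> nu1 x p \<noteq> nu2 x p)"

definition strongly_regular where
  "strongly_regular x D \<longleftrightarrow>
     (\<forall>p\<in>D. (nu1 x p - nu2 x p) * gamma1 x p * gamma2 x p \<noteq> 0 \<and> nu1 x p - nu2 x p > 0)"

definition weingarten where
  "weingarten x D f f' g g' I nu \<longleftrightarrow>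
     open I \<and>
     (\<forall>t\<in>I. (f has_real_derivative f' t) (at t) \<and> (g has_real_derivative g' t) (at t) \<and>
             f t - g t > 0 \<and> f' t * g' t \<noteq> 0) \<and>
     (\<forall>p\<in>D. nu p \<in> I \<and>
             (\<lambda>s. nu (s, snd p)) differentiable (at (fst p)) \<and>
             (\<lambda>s. nu (fst p, s)) differentiable (at (snd p)) \<and>
             pu nu p * pv nu p \<noteq> 0 \<and>
             nu1 x p = f (nu p) \<and> nu2 x p = g (nu p))"

end

theory Submission
  imports Defs
begin

text \<open>
  For principal parameters the Codazzi equation reads \<open>L\<^sub>v = (E\<^sub>v / 2) (\<nu>\<^sub>1 + \<nu>\<^sub>2)\<close>.
  Differentiating \<open>\<nu>\<^sub>1 = L / E\<close> along \<open>v\<close> therefore gives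
  \<open>(\<nu>\<^sub>1)\<^sub>v = (E\<^sub>v / 2E) (\<nu>\<^sub>2 - \<nu>\<^sub>1)\<close>. As \<open>\<nu>\<^sub>1 = f \<nu>\<close> and \<open>\<nu>\<^sub>2 = g \<nu>\<close>, this says
  \<open>f' \<nu> \<nu>\<^sub>v / (f \<nu> - g \<nu>) = - E\<^sub>v / 2E\<close>, i.e. \<open>(\<Phi> \<nu>)\<^sub>v = - (ln (sqrt E))\<^sub>v\<close>; symmetrically
  \<open>N\<^sub>u = (G\<^sub>u / 2) (\<nu>\<^sub>1 + \<nu>\<^sub>2)\<close> gives \<open>(\<Psi> \<nu>)\<^sub>u = - (ln (sqrt G))\<^sub>u\<close>.
  The Codazzi equations come from differentiating \<open>F = 0\<close> and \<open>M = 0\<close> and using the Weingarten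
  equations \<open>n\<^sub>u = - \<nu>\<^sub>1 x\<^sub>u\<close>, \<open>n\<^sub>v = - \<nu>\<^sub>2 x\<^sub>v\<close>; this needs the symmetry of mixed partial
  derivatives of \<open>x\<close> up to order three, proved here by the classical double mean value argument.
\<close>

definition partially_differentiable :: "(real \<times> real \<Rightarrow> 'a::real_normed_vector) \<Rightarrow> real \<times> real \<Rightarrow> bool" where
  "partially_differentiable f p \<longleftrightarrow>
     (\<lambda>s. f (s, snd p)) differentiable (at (fst p)) \<and> (\<lambda>s. f (fst p, s)) differentiable (at (snd p))"

lemma Ck_Suc_iff:
  "Ck (Suc k) f D \<longleftrightarrow>
     continuous_on D f \<and> (\<forall>p\<in>D. partially_differentiable f p) \<and> Ck k (pu f) D \<and> Ck k (pv f) D"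
  by (simp add: partially_differentiable_def)

lemma Ck_Suc_imp_Ck: "Ck (Suc k) f D \<Longrightarrow> Ck k f D"
proof (induction k arbitrary: f)
  case 0
  then show ?case by simp
next
  case (Suc k)
  then show ?case unfolding Ck_Suc_iff[of "Suc k"] Ck_Suc_iff[of k] by blast
qed

lemma pu_has_vector_derivative:
  "partially_differentiable f (u, v) \<Longrightarrow> ((\<lambda>s. f (s, v)) has_vector_derivative pu f (u, v)) (at u)"
  unfolding partially_differentiable_def pu_def using vector_derivative_works by auto

lemma pv_has_vector_derivative:
  "partially_differentiable f (u, v) \<Longrightarrow> ((\<lambda>s. f (u, s)) has_vector_derivative pv f (u, v)) (at v)"
  unfolding partially_differentiable_def pv_def using vector_derivative_works by auto

lemma open_slice_u: "open (D :: (real \<times> real) set) \<Longrightarrow> open {s. (s, v) \<in> D}"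
  using continuous_open_vimage[of D "\<lambda>s. (s, v)"] by (auto simp: vimage_def intro!: continuous_intros)

lemma open_slice_v: "open (D :: (real \<times> real) set) \<Longrightarrow> open {s. (u, s) \<in> D}"
  using continuous_open_vimage[of D "\<lambda>s. (u, s)"] by (auto simp: vimage_def intro!: continuous_intros)

lemma pv_cong_open:
  assumes "open D" "p \<in> D" "\<And>q. q \<in> D \<Longrightarrow> f q = g q"
  shows "pv f p = pv g p"
proof -
  have "\<forall>\<^sub>F s in nhds (snd p). s \<in> {s. (fst p, s) \<in> D}"
    using assms(1,2) open_slice_v by (intro eventually_nhds_in_open) auto
  then have "\<forall>\<^sub>F s in nhds (snd p). s \<in> UNIV \<longrightarrow> f (fst p, s) = g (fst p, s)"
    by eventually_elim (use assms(3) in auto)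
  then show ?thesis
    unfolding pv_def by (intro vector_derivative_cong_eq) auto
qed

lemma pu_inner_has_real_derivative:
  fixes f g :: "real \<times> real \<Rightarrow> 'a::real_inner"
  assumes "partially_differentiable f (u, v)" "partially_differentiable g (u, v)"
  shows "((\<lambda>s. f (s, v) \<bullet> g (s, v)) has_real_derivative pu f (u, v) \<bullet> g (u, v) + f (u, v) \<bullet> pu g (u, v)) (at u)"
  using bounded_bilinear.has_vector_derivative[OF bounded_bilinear_inner
      pu_has_vector_derivative[OF assms(1)] pu_has_vector_derivative[OF assms(2)]]
  by (simp add: has_real_derivative_iff_has_vector_derivative add.commute)

lemma pv_inner_has_real_derivative:
  fixes f g :: "real \<times> real \<Rightarrow> 'a::real_inner"
  assumes "partially_differentiable f (u, v)" "partially_differentiable g (u, v)"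
  shows "((\<lambda>s. f (u, s) \<bullet> g (u, s)) has_real_derivative pv f (u, v) \<bullet> g (u, v) + f (u, v) \<bullet> pv g (u, v)) (at v)"
  using bounded_bilinear.has_vector_derivative[OF bounded_bilinear_inner
      pv_has_vector_derivative[OF assms(1)] pv_has_vector_derivative[OF assms(2)]]
  by (simp add: has_real_derivative_iff_has_vector_derivative add.commute)

lemma pu_inner_const:
  fixes f g :: "real \<times> real \<Rightarrow> 'a::real_inner"
  assumes "open D" "(u, v) \<in> D" "\<And>q. q \<in> D \<Longrightarrow> f q \<bullet> g q = c"
    and "partially_differentiable f (u, v)" "partially_differentiable g (u, v)"
  shows "pu f (u, v) \<bullet> g (u, v) + f (u, v) \<bullet> pu g (u, v) = 0"
proof (rule DERIV_unique[OF pu_inner_has_real_derivative[OF assms(4,5)]])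
  show "((\<lambda>s. f (s, v) \<bullet> g (s, v)) has_real_derivative 0) (at u)"
    by (rule has_field_derivative_transform_within_open[OF DERIV_const open_slice_u[OF assms(1)]])
      (use assms(2,3) in auto)
qed

lemma pv_inner_const:
  fixes f g :: "real \<times> real \<Rightarrow> 'a::real_inner"
  assumes "open D" "(u, v) \<in> D" "\<And>q. q \<in> D \<Longrightarrow> f q \<bullet> g q = c"
    and "partially_differentiable f (u, v)" "partially_differentiable g (u, v)"
  shows "pv f (u, v) \<bullet> g (u, v) + f (u, v) \<bullet> pv g (u, v) = 0"
proof (rule DERIV_unique[OF pv_inner_has_real_derivative[OF assms(4,5)]])
  show "((\<lambda>s. f (u, s) \<bullet> g (u, s)) has_real_derivative 0) (at v)"
    by (rule has_field_derivative_transform_within_open[OF DERIV_const open_slice_v[OF assms(1)]])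
      (use assms(2,3) in auto)
qed

section \<open>Symmetry of mixed partial derivatives\<close>

lemma double_difference_mvt:
  fixes \<phi> \<phi>u \<phi>uv :: "real \<times> real \<Rightarrow> real"
  assumes h: "h > 0"
    and du: "\<And>a b. a \<in> {u..u+h} \<Longrightarrow> b \<in> {v..v+h} \<Longrightarrow>
               ((\<lambda>s. \<phi> (s, b)) has_real_derivative \<phi>u (a, b)) (at a)"
    and duv: "\<And>a b. a \<in> {u..u+h} \<Longrightarrow> b \<in> {v..v+h} \<Longrightarrow>
               ((\<lambda>s. \<phi>u (a, s)) has_real_derivative \<phi>uv (a, b)) (at b)"
  obtains a b where "a \<in> {u<..<u+h}" "b \<in> {v<..<v+h}"
    "\<phi> (u+h, v+h) - \<phi> (u+h, v) - \<phi> (u, v+h) + \<phi> (u, v) = h\<^sup>2 * \<phi>uv (a, b)"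
proof -
  have "\<exists>a. u < a \<and> a < u+h \<and>
      (\<phi> (u+h, v+h) - \<phi> (u+h, v)) - (\<phi> (u, v+h) - \<phi> (u, v)) = (u+h-u) * (\<phi>u (a, v+h) - \<phi>u (a, v))"
    using h by (intro MVT2) (auto intro!: derivative_eq_intros du)
  then obtain a where a: "u < a" "a < u+h"
      "\<phi> (u+h, v+h) - \<phi> (u+h, v) - \<phi> (u, v+h) + \<phi> (u, v) = h * (\<phi>u (a, v+h) - \<phi>u (a, v))"
    by (auto simp: algebra_simps)
  have "\<exists>b. v < b \<and> b < v+h \<and> \<phi>u (a, v+h) - \<phi>u (a, v) = (v+h-v) * \<phi>uv (a, b)"
    using h a by (intro MVT2) (auto intro!: duv)
  then obtain b where "v < b" "b < v+h" "\<phi>u (a, v+h) - \<phi>u (a, v) = h * \<phi>uv (a, b)"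
    by auto
  with a show thesis
    by (intro that[of a b]) (auto simp: power2_eq_square)
qed

lemma mixed_partials_commute_real:
  fixes \<phi> \<phi>u \<phi>v \<phi>uv \<phi>vu :: "real \<times> real \<Rightarrow> real"
  assumes D: "open D" "(u, v) \<in> D"
    and du: "\<And>a b. (a, b) \<in> D \<Longrightarrow> ((\<lambda>s. \<phi> (s, b)) has_real_derivative \<phi>u (a, b)) (at a)"
    and dv: "\<And>a b. (a, b) \<in> D \<Longrightarrow> ((\<lambda>s. \<phi> (a, s)) has_real_derivative \<phi>v (a, b)) (at b)"
    and duv: "\<And>a b. (a, b) \<in> D \<Longrightarrow> ((\<lambda>s. \<phi>u (a, s)) has_real_derivative \<phi>uv (a, b)) (at b)"
    and dvu: "\<And>a b. (a, b) \<in> D \<Longrightarrow> ((\<lambda>s. \<phi>v (s, b)) has_real_derivative \<phi>vu (a, b)) (at a)"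
    and cont: "continuous_on D \<phi>uv" "continuous_on D \<phi>vu"
  shows "\<phi>uv (u, v) = \<phi>vu (u, v)"
proof (rule eq_iff_diff_eq_0[THEN iffD2], rule dense_eq0_I)
  fix e :: real
  assume "e > 0"
  have "(\<phi>uv \<longlongrightarrow> \<phi>uv (u, v)) (nhds (u, v))" "(\<phi>vu \<longlongrightarrow> \<phi>vu (u, v)) (nhds (u, v))"
    using cont D unfolding continuous_on_eq_continuous_at[OF D(1)] continuous_at
      tendsto_at_iff_tendsto_nhds by blast+
  moreover have "e / 2 > 0" using \<open>e > 0\<close> by simp
  ultimately have "\<forall>\<^sub>F q in nhds (u, v). q \<in> D \<and> dist (\<phi>uv q) (\<phi>uv (u, v)) < e / 2
                                          \<and> dist (\<phi>vu q) (\<phi>vu (u, v)) < e / 2"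
    using D by (intro eventually_conj eventually_nhds_in_open) (auto simp only: tendsto_iff)
  then obtain d where "d > 0" and d: "\<And>q. dist q (u, v) < d \<Longrightarrow>
      q \<in> D \<and> dist (\<phi>uv q) (\<phi>uv (u, v)) < e / 2 \<and> dist (\<phi>vu q) (\<phi>vu (u, v)) < e / 2"
    by (auto simp: eventually_nhds_metric)
  define h where "h = d / 3"
  have "h > 0" using \<open>d > 0\<close> by (simp add: h_def)
  have near: "dist (a, b) (u, v) < d" if "a \<in> {u..u+h}" "b \<in> {v..v+h}" for a b
  proof -
    have "dist (a, b) (u, v) \<le> \<bar>a - u\<bar> + \<bar>b - v\<bar>"
      by (simp add: dist_Pair_Pair dist_real_def sqrt_sum_squares_le_sum_abs)
    also have "\<dots> < d" using that \<open>d > 0\<close> by (auto simp: h_def)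
    finally show ?thesis .
  qed
  obtain a1 b1 where ab1: "a1 \<in> {u<..<u+h}" "b1 \<in> {v<..<v+h}"
    "\<phi> (u+h, v+h) - \<phi> (u+h, v) - \<phi> (u, v+h) + \<phi> (u, v) = h\<^sup>2 * \<phi>uv (a1, b1)"
    by (rule double_difference_mvt[of h u v \<phi> \<phi>u \<phi>uv]) (use \<open>h > 0\<close> near d du duv in auto)
  \<comment> \<open>the same second difference, with the roles of the two variables exchanged\<close>
  obtain b2 a2 where ab2: "b2 \<in> {v<..<v+h}" "a2 \<in> {u<..<u+h}"
    "\<phi> (u+h, v+h) - \<phi> (u, v+h) - \<phi> (u+h, v) + \<phi> (u, v) = h\<^sup>2 * \<phi>vu (a2, b2)"
    by (rule double_difference_mvt[of h v u "\<lambda>(b, a). \<phi> (a, b)" "\<lambda>(b, a). \<phi>v (a, b)"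
          "\<lambda>(b, a). \<phi>vu (a, b)"]) (use \<open>h > 0\<close> near d dv dvu in auto)
  have "h\<^sup>2 * \<phi>uv (a1, b1) = h\<^sup>2 * \<phi>vu (a2, b2)"
    using ab1(3) ab2(3) by linarith
  then have "\<phi>uv (a1, b1) = \<phi>vu (a2, b2)"
    using \<open>h > 0\<close> by simp
  moreover have "dist (\<phi>uv (a1, b1)) (\<phi>uv (u, v)) < e / 2" "dist (\<phi>vu (a2, b2)) (\<phi>vu (u, v)) < e / 2"
    using d near ab1 ab2 by auto
  ultimately show "\<bar>\<phi>uv (u, v) - \<phi>vu (u, v)\<bar> \<le> e"
    unfolding dist_real_def by linarith
qed

lemma has_real_derivative_vec_nth:
  fixes f :: "real \<Rightarrow> real^'n"
  shows "(f has_vector_derivative f') (at t) \<Longrightarrow> ((\<lambda>s. f s $ i) has_real_derivative f' $ i) (at t)"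
  unfolding has_real_derivative_iff_has_vector_derivative
  by (rule bounded_linear.has_vector_derivative[OF bounded_linear_vec_nth])

lemma mixed_partials_commute:
  fixes y :: "real \<times> real \<Rightarrow> real^'n"
  assumes "Ck 2 y D" "open D" "p \<in> D"
  shows "pv (pu y) p = pu (pv y) p"
proof -
  obtain u v where p: "p = (u, v)" by fastforce
  have diff: "partially_differentiable y q" "partially_differentiable (pu y) q"
      "partially_differentiable (pv y) q" if "q \<in> D" for q
    using assms(1) that by (simp_all add: numeral_2_eq_2 partially_differentiable_def)
  have cont: "continuous_on D (pv (pu y))" "continuous_on D (pu (pv y))"
    using assms(1) by (simp_all add: numeral_2_eq_2)
  show ?thesis
    unfolding vec_eq_iff p
  proof
    fix i
    show "pv (pu y) (u, v) $ i = pu (pv y) (u, v) $ i"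
      by (rule mixed_partials_commute_real[where \<phi>="\<lambda>q. y q $ i" and \<phi>u="\<lambda>q. pu y q $ i"
            and \<phi>v="\<lambda>q. pv y q $ i", OF assms(2) assms(3)[unfolded p]])
        (use diff cont in \<open>auto intro!: has_real_derivative_vec_nth continuous_intros
            pu_has_vector_derivative pv_has_vector_derivative\<close>)
  qed
qed

section \<open>Weingarten and Codazzi equations for principal parameters\<close>

lemma unit_normal_orthogonal: "unit_normal x p \<bullet> pu x p = 0" "unit_normal x p \<bullet> pv x p = 0"
  unfolding unit_normal_def by (simp_all add: dot_cross_self inner_commute)

lemma unit_normal_inner_self:
  "cross3 (pu x p) (pv x p) \<noteq> 0 \<Longrightarrow> unit_normal x p \<bullet> unit_normal x p = 1"
  unfolding unit_normal_def by (simp add: dot_square_norm)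

lemma differentiable_unit_cross3:
  fixes a b :: "real \<Rightarrow> real^3"
  assumes "a differentiable (at t)" "b differentiable (at t)" "cross3 (a t) (b t) \<noteq> 0"
  shows "(\<lambda>s. (1 / norm (cross3 (a s) (b s))) *\<^sub>R cross3 (a s) (b s)) differentiable (at t)"
proof -
  have "bounded_bilinear cross3"
    using bilinear_cross bilinear_conv_bounded_bilinear by blast
  then have cross: "(\<lambda>s. cross3 (a s) (b s)) differentiable (at t)"
    using assms(1,2) by (auto simp: differentiable_def intro: bounded_bilinear.FDERIV)
  have "(\<lambda>s. norm (cross3 (a s) (b s))) differentiable (at t)"
    using differentiable_chain_at[OF cross differentiable_norm_at[OF assms(3)]] by (simp add: o_def)
  then have "(\<lambda>s. 1 / norm (cross3 (a s) (b s))) differentiable (at t)"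
    using assms(3) by (intro differentiable_divide) auto
  then show ?thesis
    using cross by (rule differentiable_scaleR)
qed

lemma partially_differentiable_unit_normal:
  assumes "partially_differentiable (pu x) p" "partially_differentiable (pv x) p"
    and "cross3 (pu x p) (pv x p) \<noteq> 0"
  shows "partially_differentiable (unit_normal x) p"
  using assms unfolding partially_differentiable_def unit_normal_def
  by (auto intro!: differentiable_unit_cross3)

lemma norm_cross3_squared_smult:
  fixes a b w :: "real^3"
  shows "(norm (cross3 a b))\<^sup>2 *\<^sub>R w = ((b \<bullet> b) * (w \<bullet> a) - (a \<bullet> b) * (w \<bullet> b)) *\<^sub>R a
     + ((a \<bullet> a) * (w \<bullet> b) - (a \<bullet> b) * (w \<bullet> a)) *\<^sub>R b + (w \<bullet> cross3 a b) *\<^sub>R cross3 a b"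
  unfolding power2_norm_eq_inner by (simp add: cross3_simps forall_3)

lemma orthogonal_frame_collinear:
  fixes a b n w :: "real^3"
  assumes "cross3 a b \<noteq> 0" "a \<bullet> b = 0" "n \<bullet> a = 0" "n \<bullet> b = 0" "n \<noteq> 0"
    and "w \<bullet> n = 0" "w \<bullet> b = 0"
  shows "(a \<bullet> a) *\<^sub>R w = (w \<bullet> a) *\<^sub>R a"
proof -
  have frame: "(norm (cross3 a b))\<^sup>2 *\<^sub>R z = ((b \<bullet> b) * (z \<bullet> a)) *\<^sub>R a + ((a \<bullet> a) * (z \<bullet> b)) *\<^sub>R b
      + (z \<bullet> cross3 a b) *\<^sub>R cross3 a b" for z
    using norm_cross3_squared_smult[of a b z] assms(2) by simp
  have n_cross: "(norm (cross3 a b))\<^sup>2 *\<^sub>R n = (n \<bullet> cross3 a b) *\<^sub>R cross3 a b"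
    using frame[of n] assms(3,4) by (simp add: inner_commute)
  then have "n \<bullet> cross3 a b \<noteq> 0"
    using assms(1,5) by auto
  moreover have "(n \<bullet> cross3 a b) * (w \<bullet> cross3 a b) = 0"
    using arg_cong[OF n_cross, of "\<lambda>z. w \<bullet> z"] assms(6) by (simp add: inner_commute)
  ultimately have "w \<bullet> cross3 a b = 0" by simp
  then have "((a \<bullet> a) * (b \<bullet> b)) *\<^sub>R w = ((b \<bullet> b) * (w \<bullet> a)) *\<^sub>R a"
    using frame[of w] assms(2,7) norm_cross_dot[of a b] by (simp add: power2_norm_eq_inner power_mult_distrib)
  moreover have "b \<bullet> b \<noteq> 0"
    using assms(1) by auto
  ultimately show ?thesis
    by (metis (no_types, lifting) mult.commute scaleR_scaleR scaleR_cancel_left)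
qed

lemma regular_surface_partially_differentiable:
  assumes "regular_surface x D" "p \<in> D"
  shows "partially_differentiable (pu x) p" "partially_differentiable (pv x) p"
    and "partially_differentiable (pu (pu x)) p" "partially_differentiable (pv (pu x)) p"
    and "partially_differentiable (pv (pv x)) p" "partially_differentiable (unit_normal x) p"
proof -
  have "Ck (Suc (Suc (Suc 0))) x D"
    using assms(1) by (simp add: regular_surface_def numeral_3_eq_3 del: Ck.simps)
  then show "partially_differentiable (pu x) p" "partially_differentiable (pv x) p"
    "partially_differentiable (pu (pu x)) p" "partially_differentiable (pv (pu x)) p"
    "partially_differentiable (pv (pv x)) p"
    using assms(2) by (simp_all add: partially_differentiable_def)
  then show "partially_differentiable (unit_normal x) p"
    using assms by (intro partially_differentiable_unit_normal) (auto simp: regular_surface_def)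
qed

lemma regular_surface_mixed_partials:
  assumes "regular_surface x D" "p \<in> D"
  shows "pv (pu x) p = pu (pv x) p"
    and "pv (pu (pu x)) p = pu (pv (pu x)) p"
    and "pu (pv (pv x)) p = pv (pv (pu x)) p"
proof -
  have "open D" and "Ck (Suc 2) x D"
    using assms(1) by (simp_all add: regular_surface_def numeral_3_eq_3 del: Ck.simps)
  then have C2: "Ck 2 x D" "Ck 2 (pu x) D" "Ck 2 (pv x) D"
    using Ck_Suc_imp_Ck Ck_Suc_iff by blast+
  show "pv (pu x) p = pu (pv x) p" "pv (pu (pu x)) p = pu (pv (pu x)) p"
    using mixed_partials_commute[OF C2(1) \<open>open D\<close> assms(2)]
      mixed_partials_commute[OF C2(2) \<open>open D\<close> assms(2)] by simp_all
  have "pu (pv (pv x)) p = pv (pu (pv x)) p"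
    using mixed_partials_commute[OF C2(3) \<open>open D\<close> assms(2)] by simp
  also have "\<dots> = pv (pv (pu x)) p"
    using mixed_partials_commute[OF C2(1) \<open>open D\<close>] \<open>open D\<close> assms(2)
    by (intro pv_cong_open[of D]) auto
  finally show "pu (pv (pv x)) p = pv (pv (pu x)) p" .
qed

lemma regular_surface_coefE_coefG_pos:
  assumes "regular_surface x D" "p \<in> D"
  shows "coefE x p > 0" "coefG x p > 0"
  using assms unfolding regular_surface_def coefE_def coefG_def
  by (auto simp: inner_gt_zero_iff)

lemma principal_weingarten_equations:
  assumes reg: "regular_surface x D" and FM: "\<forall>q\<in>D. coefF x q = 0 \<and> coefM x q = 0"
    and p: "(u, v) \<in> D"
  shows "coefE x (u, v) *\<^sub>R pu (unit_normal x) (u, v) = - coefL x (u, v) *\<^sub>R pu x (u, v)"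
    and "coefG x (u, v) *\<^sub>R pv (unit_normal x) (u, v) = - coefN x (u, v) *\<^sub>R pv x (u, v)"
proof -
  let ?n = "unit_normal x"
  have D: "open D" and cross: "cross3 (pu x (u, v)) (pv x (u, v)) \<noteq> 0"
    using reg p by (auto simp: regular_surface_def)
  note diff = regular_surface_partially_differentiable[OF reg p]
  have n_unit: "?n q \<bullet> ?n q = 1" if "q \<in> D" for q
    using reg that by (auto simp: regular_surface_def unit_normal_inner_self)
  have "?n (u, v) \<noteq> 0"
    using n_unit[OF p] by auto
  have F: "pu x q \<bullet> pv x q = 0" and M: "pv (pu x) q \<bullet> ?n q = 0" if "q \<in> D" for q
    using FM that by (auto simp: coefF_def coefM_def)
  have nu_n: "pu ?n (u, v) \<bullet> ?n (u, v) = 0" and nv_n: "pv ?n (u, v) \<bullet> ?n (u, v) = 0"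
    using pu_inner_const[OF D p n_unit] pv_inner_const[OF D p n_unit] diff(6)
    by (simp_all add: inner_commute)
  have "pu ?n (u, v) \<bullet> pu x (u, v) + ?n (u, v) \<bullet> pu (pu x) (u, v) = 0"
    "pu ?n (u, v) \<bullet> pv x (u, v) + ?n (u, v) \<bullet> pu (pv x) (u, v) = 0"
    "pv ?n (u, v) \<bullet> pu x (u, v) + ?n (u, v) \<bullet> pv (pu x) (u, v) = 0"
    "pv ?n (u, v) \<bullet> pv x (u, v) + ?n (u, v) \<bullet> pv (pv x) (u, v) = 0"
    using unit_normal_orthogonal diff
    by (auto intro!: pu_inner_const[OF D p] pv_inner_const[OF D p])
  then have nu_xu: "pu ?n (u, v) \<bullet> pu x (u, v) = - coefL x (u, v)"
    and nu_xv: "pu ?n (u, v) \<bullet> pv x (u, v) = 0"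
    and nv_xu: "pv ?n (u, v) \<bullet> pu x (u, v) = 0"
    and nv_xv: "pv ?n (u, v) \<bullet> pv x (u, v) = - coefN x (u, v)"
    using M[OF p] regular_surface_mixed_partials(1)[OF reg p]
    by (auto simp: coefL_def coefN_def inner_commute)
  show "coefE x (u, v) *\<^sub>R pu ?n (u, v) = - coefL x (u, v) *\<^sub>R pu x (u, v)"
    using orthogonal_frame_collinear[OF cross F[OF p] unit_normal_orthogonal \<open>?n (u, v) \<noteq> 0\<close>
        nu_n nu_xv] by (simp add: coefE_def nu_xu)
  have "cross3 (pv x (u, v)) (pu x (u, v)) \<noteq> 0"
    using cross by (metis cross_skew neg_equal_0_iff_equal)
  then show "coefG x (u, v) *\<^sub>R pv ?n (u, v) = - coefN x (u, v) *\<^sub>R pv x (u, v)"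
    using orthogonal_frame_collinear[OF _ _ unit_normal_orthogonal(2,1) \<open>?n (u, v) \<noteq> 0\<close> nv_n nv_xu]
      F[OF p] by (simp add: coefG_def nv_xv inner_commute[of "pv x (u, v)" "pu x (u, v)"])
qed

lemma coefE_coefG_has_real_derivative:
  assumes "regular_surface x D" "(u, v) \<in> D"
  shows "((\<lambda>s. coefE x (u, s)) has_real_derivative 2 * (pu x (u, v) \<bullet> pv (pu x) (u, v))) (at v)"
    and "((\<lambda>s. coefG x (s, v)) has_real_derivative 2 * (pv x (u, v) \<bullet> pu (pv x) (u, v))) (at u)"
  using pv_inner_has_real_derivative[of "pu x" u v "pu x"] pu_inner_has_real_derivative[of "pv x" u v "pv x"]
    regular_surface_partially_differentiable[OF assms]
  by (simp_all add: coefE_def coefG_def inner_commute)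

lemma principal_codazzi_equations:
  assumes reg: "regular_surface x D" and FM: "\<forall>q\<in>D. coefF x q = 0 \<and> coefM x q = 0"
    and p: "(u, v) \<in> D"
  shows "((\<lambda>s. coefL x (u, s)) has_real_derivative
            (pu x (u, v) \<bullet> pv (pu x) (u, v)) * (nu1 x (u, v) + nu2 x (u, v))) (at v)"
    and "((\<lambda>s. coefN x (s, v)) has_real_derivative
            (pv x (u, v) \<bullet> pu (pv x) (u, v)) * (nu1 x (u, v) + nu2 x (u, v))) (at u)"
proof -
  let ?n = "unit_normal x" and ?p = "(u, v)"
  have D: "open D"
    using reg by (simp add: regular_surface_def)
  note diff = regular_surface_partially_differentiable[OF reg p]
  note mixed = regular_surface_mixed_partials[OF reg p]
  note weingarten = principal_weingarten_equations[OF reg FM p]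
  have E: "coefE x ?p > 0" and G: "coefG x ?p > 0"
    using regular_surface_coefE_coefG_pos[OF reg p] by auto
  have F: "pu x q \<bullet> pv x q = 0" and M: "pv (pu x) q \<bullet> ?n q = 0" if "q \<in> D" for q
    using FM that by (auto simp: coefF_def coefM_def)
  have F_u: "pu (pu x) ?p \<bullet> pv x ?p = - (pu x ?p \<bullet> pv (pu x) ?p)"
    and F_v: "pv (pv x) ?p \<bullet> pu x ?p = - (pv x ?p \<bullet> pu (pv x) ?p)"
    using pu_inner_const[of D u v "pu x" "pv x", OF D p F] pv_inner_const[of D u v "pu x" "pv x", OF D p F]
      diff mixed(1)
    by (simp_all add: inner_commute add_eq_0_iff)
  have M_u: "pv (pu (pu x)) ?p \<bullet> ?n ?p = - (pv (pu x) ?p \<bullet> pu ?n ?p)"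
    and M_v: "pu (pv (pv x)) ?p \<bullet> ?n ?p = - (pu (pv x) ?p \<bullet> pv ?n ?p)"
    using pu_inner_const[of D u v "pv (pu x)" ?n, OF D p M] pv_inner_const[of D u v "pv (pu x)" ?n, OF D p M]
      diff mixed
    by (simp_all add: add_eq_0_iff)
  have nu: "w \<bullet> pu ?n ?p = - nu1 x ?p * (w \<bullet> pu x ?p)"
    and nv: "w \<bullet> pv ?n ?p = - nu2 x ?p * (w \<bullet> pv x ?p)" for w
    using arg_cong[OF weingarten(1), of "inner w"] arg_cong[OF weingarten(2), of "inner w"] E G
    by (simp_all add: nu1_def nu2_def field_simps)
  have "((\<lambda>s. coefL x (u, s)) has_real_derivative
          pv (pu (pu x)) ?p \<bullet> ?n ?p + pu (pu x) ?p \<bullet> pv ?n ?p) (at v)"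
    unfolding coefL_def using diff by (intro pv_inner_has_real_derivative)
  also have "pv (pu (pu x)) ?p \<bullet> ?n ?p + pu (pu x) ?p \<bullet> pv ?n ?p
      = (pu x ?p \<bullet> pv (pu x) ?p) * (nu1 x ?p + nu2 x ?p)"
    unfolding M_u nu nv F_u by (simp add: algebra_simps inner_commute)
  finally show "((\<lambda>s. coefL x (u, s)) has_real_derivative
      (pu x ?p \<bullet> pv (pu x) ?p) * (nu1 x ?p + nu2 x ?p)) (at v)" .
  have "((\<lambda>s. coefN x (s, v)) has_real_derivative
          pu (pv (pv x)) ?p \<bullet> ?n ?p + pv (pv x) ?p \<bullet> pu ?n ?p) (at u)"
    unfolding coefN_def using diff by (intro pu_inner_has_real_derivative)
  also have "pu (pv (pv x)) ?p \<bullet> ?n ?p + pv (pv x) ?p \<bullet> pu ?n ?p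
      = (pv x ?p \<bullet> pu (pv x) ?p) * (nu1 x ?p + nu2 x ?p)"
    unfolding M_v nu nv F_v by (simp add: algebra_simps inner_commute)
  finally show "((\<lambda>s. coefN x (s, v)) has_real_derivative
      (pv x ?p \<bullet> pu (pv x) ?p) * (nu1 x ?p + nu2 x ?p)) (at u)" .
qed

section \<open>The functions \<open>\<lambda>\<close> and \<open>\<mu>\<close>\<close>

lemma ln_sqrt_mult_exp_has_derivative_zero:
  fixes E L \<nu> h \<Phi> :: "real \<Rightarrow> real"
  assumes S: "open S" "t \<in> S"
    and E_pos: "\<And>s. s \<in> S \<Longrightarrow> E s > 0"
    and ratio: "\<And>s. s \<in> S \<Longrightarrow> L s / E s = h (\<nu> s)"
    and dE: "(E has_real_derivative 2 * c) (at t)"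
    and dL: "(L has_real_derivative c * (h (\<nu> t) + k)) (at t)"
    and d\<nu>: "(\<nu> has_real_derivative \<nu>') (at t)"
    and dh: "(h has_real_derivative h') (at (\<nu> t))"
    and d\<Phi>: "(\<Phi> has_real_derivative h' / (h (\<nu> t) - k)) (at (\<nu> t))"
    and hk: "h (\<nu> t) \<noteq> k"
  shows "((\<lambda>s. ln (sqrt (E s) * exp (\<Phi> (\<nu> s)))) has_real_derivative 0) (at t)"
proof -
  have Et: "E t > 0"
    using E_pos S by blast
  then have L_t: "L t = h (\<nu> t) * E t"
    using ratio[of t] S by (simp add: field_simps)
  have "((\<lambda>s. L s / E s) has_real_derivative c / E t * (k - h (\<nu> t))) (at t)"
    by (rule DERIV_cong[OF DERIV_divide[OF dL dE]]) (use Et in \<open>auto simp: L_t field_simps\<close>)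
  then have "((\<lambda>s. h (\<nu> s)) has_real_derivative c / E t * (k - h (\<nu> t))) (at t)"
    using S ratio by (rule has_field_derivative_transform_within_open)
  then have h\<nu>': "h' * \<nu>' = c / E t * (k - h (\<nu> t))"
    using DERIV_chain2[OF dh d\<nu>] DERIV_unique by blast
  have "h' / (h (\<nu> t) - k) * \<nu>' = c / E t * ((k - h (\<nu> t)) / (h (\<nu> t) - k))"
    by (simp add: h\<nu>')
  also have "(k - h (\<nu> t)) / (h (\<nu> t) - k) = -1"
    using hk by (simp add: divide_simps)
  finally have cancel: "c / E t + h' / (h (\<nu> t) - k) * \<nu>' = 0"
    by simp
  have "((\<lambda>s. ln (E s) / 2 + \<Phi> (\<nu> s)) has_real_derivative c / E t + h' / (h (\<nu> t) - k) * \<nu>') (at t)"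
    using Et by (auto intro!: derivative_eq_intros DERIV_chain2[OF d\<Phi> d\<nu>] dE simp: field_simps)
  then have "((\<lambda>s. ln (E s) / 2 + \<Phi> (\<nu> s)) has_real_derivative 0) (at t)"
    by (simp only: cancel)
  then show ?thesis
    using S by (rule has_field_derivative_transform_within_open) (auto simp: ln_mult ln_sqrt dest: E_pos)
qed

lemma weingarten_at:
  assumes "weingarten x D f f' g g' I \<nu>" "(u, v) \<in> D"
  shows "\<nu> (u, v) \<in> I" "g (\<nu> (u, v)) < f (\<nu> (u, v))"
    and "(f has_real_derivative f' (\<nu> (u, v))) (at (\<nu> (u, v)))"
    and "(g has_real_derivative g' (\<nu> (u, v))) (at (\<nu> (u, v)))"
    and "((\<lambda>s. \<nu> (s, v)) has_real_derivative pu \<nu> (u, v)) (at u)"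
    and "((\<lambda>s. \<nu> (u, s)) has_real_derivative pv \<nu> (u, v)) (at v)"
    and "coefL x (u, v) / coefE x (u, v) = f (\<nu> (u, v))"
    and "coefN x (u, v) / coefG x (u, v) = g (\<nu> (u, v))"
proof -
  have "partially_differentiable \<nu> (u, v)"
    using assms by (fastforce simp: weingarten_def partially_differentiable_def)
  then show "((\<lambda>s. \<nu> (s, v)) has_real_derivative pu \<nu> (u, v)) (at u)"
      "((\<lambda>s. \<nu> (u, s)) has_real_derivative pv \<nu> (u, v)) (at v)"
    by (simp_all add: has_real_derivative_iff_has_vector_derivative
        pu_has_vector_derivative pv_has_vector_derivative)
  show "\<nu> (u, v) \<in> I" "g (\<nu> (u, v)) < f (\<nu> (u, v))"
    "(f has_real_derivative f' (\<nu> (u, v))) (at (\<nu> (u, v)))"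
    "(g has_real_derivative g' (\<nu> (u, v))) (at (\<nu> (u, v)))"
    "coefL x (u, v) / coefE x (u, v) = f (\<nu> (u, v))"
    "coefN x (u, v) / coefG x (u, v) = g (\<nu> (u, v))"
    using assms by (auto simp: weingarten_def nu1_def nu2_def)
qed

theorem lemma4p3:
  fixes x :: "real \<times> real \<Rightarrow> real^3" and D :: "(real \<times> real) set"
    and f f' g g' \<Phi> \<Psi> :: "real \<Rightarrow> real" and I :: "real set"
    and \<nu> :: "real \<times> real \<Rightarrow> real"
  assumes "regular_surface x D"
    and "principal_params x D"
    and "strongly_regular x D"
    and "weingarten x D f f' g g' I \<nu>"
    and "\<forall>t\<in>I. (\<Phi> has_real_derivative f' t / (f t - g t)) (at t)"
    and "\<forall>t\<in>I. (\<Psi> has_real_derivative g' t / (g t - f t)) (at t)"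
  shows "\<forall>(u, v)\<in>D.
           ((\<lambda>s. ln (sqrt (coefE x (u, s)) * exp (\<Phi> (\<nu> (u, s))))) has_real_derivative 0) (at v)
         \<and> ((\<lambda>s. ln (sqrt (coefG x (s, v)) * exp (\<Psi> (\<nu> (s, v))))) has_real_derivative 0) (at u)"
proof (intro ballI, clarify, intro conjI)
  fix u v
  assume p: "(u, v) \<in> D"
  note reg = assms(1) and W = weingarten_at[OF assms(4)]
  have D: "open D"
    using reg by (simp add: regular_surface_def)
  have FM: "\<forall>q\<in>D. coefF x q = 0 \<and> coefM x q = 0"
    using assms(2) by (simp add: principal_params_def)
  have \<Phi>: "(\<Phi> has_real_derivative f' (\<nu> (u, v)) / (f (\<nu> (u, v)) - g (\<nu> (u, v)))) (at (\<nu> (u, v)))"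
    and \<Psi>: "(\<Psi> has_real_derivative g' (\<nu> (u, v)) / (g (\<nu> (u, v)) - f (\<nu> (u, v)))) (at (\<nu> (u, v)))"
    using assms(5,6) W(1)[OF p] by auto
  note codazzi = principal_codazzi_equations[OF reg FM p, unfolded nu1_def nu2_def W(7,8)[OF p]]
  show "((\<lambda>s. ln (sqrt (coefE x (u, s)) * exp (\<Phi> (\<nu> (u, s))))) has_real_derivative 0) (at v)"
    using open_slice_v[OF D] p regular_surface_coefE_coefG_pos[OF reg] W[OF p] W(7,8)
      coefE_coefG_has_real_derivative(1)[OF reg p] codazzi(1) \<Phi>
    by (intro ln_sqrt_mult_exp_has_derivative_zero[where S = "{s. (u, s) \<in> D}" and \<nu> = "\<lambda>s. \<nu> (u, s)"
          and h = f and k = "g (\<nu> (u, v))"]) auto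
  show "((\<lambda>s. ln (sqrt (coefG x (s, v)) * exp (\<Psi> (\<nu> (s, v))))) has_real_derivative 0) (at u)"
    using open_slice_u[OF D] p regular_surface_coefE_coefG_pos[OF reg] W[OF p] W(7,8)
      coefE_coefG_has_real_derivative(2)[OF reg p] codazzi(2) \<Psi>
    by (intro ln_sqrt_mult_exp_has_derivative_zero[where S = "{s. (s, v) \<in> D}" and \<nu> = "\<lambda>s. \<nu> (s, v)"
          and h = g and k = "f (\<nu> (u, v))"]) (auto simp: add.commute)
qed

end
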